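(* Let $k\geq 4$ and let $G$ be a diregular $(2,k,+3)$-digraph. Let $u,v$ be distinct vertices with exactly one common out-neighbour $u_2$, and write $N^+(u)=\{u_1,u_2\}$, $N^+(v)=\{v_1,u_2\}$. Then $v_1\in O(u)$, $u_1\in O(v)$, and $|O(u)\cap N^+(v_1)|=|O(v)\cap N^+(u_1)|=1$.
   Context: A digraph is $k$-geodetic if for every ordered pair of vertices $x,y$ there is at most one directed path from $x$ to $y$ of length at most $k$ (the trivial path counts). A diregular $(2,k,+3)$-digraph is a $k$-geodetic digraph of order $1+2+\dots+2^k+3$ in which every vertex has in- and out-degree $2$. $N^+(x)$ is the set of out-neighbours of $x$. $d(x,y)$ is the directed distance; $O(x)=\{y: d(x,y)\geq k+1\}$ is the outlier set of $x$. *)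

theory Defs
  imports Main "HOL-Library.Extended_Nat"
begin

definition out_nbrs :: "('a \<Rightarrow> 'a \<Rightarrow> bool) \<Rightarrow> 'a \<Rightarrow> 'a set" where
  "out_nbrs A x = {y. A x y}"

definition in_nbrs :: "('a \<Rightarrow> 'a \<Rightarrow> bool) \<Rightarrow> 'a \<Rightarrow> 'a set" where
  "in_nbrs A x = {y. A y x}"

text \<open>A directed path (walk) given as its vertex list; its length is the number of arcs.\<close>
definition is_path :: "'a set \<Rightarrow> ('a \<Rightarrow> 'a \<Rightarrow> bool) \<Rightarrow> 'a list \<Rightarrow> 'a \<Rightarrow> 'a \<Rightarrow> bool" where
  "is_path V A p x y \<longleftrightarrow> p \<noteq> [] \<and> hd p = x \<and> last p = y \<and> set p \<subseteq> V \<and>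
     (\<forall>i. Suc i < length p \<longrightarrow> A (p ! i) (p ! Suc i))"

definition path_len :: "'a list \<Rightarrow> nat" where
  "path_len p = length p - 1"

definition k_geodetic :: "'a set \<Rightarrow> ('a \<Rightarrow> 'a \<Rightarrow> bool) \<Rightarrow> nat \<Rightarrow> bool" where
  "k_geodetic V A k \<longleftrightarrow> (\<forall>x\<in>V. \<forall>y\<in>V. \<forall>p q.
      is_path V A p x y \<and> path_len p \<le> k \<and> is_path V A q x y \<and> path_len q \<le> k \<longrightarrow> p = q)"

definition dist :: "'a set \<Rightarrow> ('a \<Rightarrow> 'a \<Rightarrow> bool) \<Rightarrow> 'a \<Rightarrow> 'a \<Rightarrow> enat" where
  "dist V A x y = (if \<exists>p. is_path V A p x y
     then enat (LEAST n. \<exists>p. is_path V A p x y \<and> path_len p = n) else \<infinity>)"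

definition outlier_set :: "'a set \<Rightarrow> ('a \<Rightarrow> 'a \<Rightarrow> bool) \<Rightarrow> nat \<Rightarrow> 'a \<Rightarrow> 'a set" where
  "outlier_set V A k x = {y \<in> V. dist V A x y \<ge> enat (k + 1)}"

definition diregular_2k3 :: "'a set \<Rightarrow> ('a \<Rightarrow> 'a \<Rightarrow> bool) \<Rightarrow> nat \<Rightarrow> bool" where
  "diregular_2k3 V A k \<longleftrightarrow> finite V \<and>
     (\<forall>x y. A x y \<longrightarrow> x \<in> V \<and> y \<in> V) \<and>
     (\<forall>x\<in>V. card (out_nbrs A x) = 2 \<and> card (in_nbrs A x) = 2) \<and>
     k_geodetic V A k \<and>
     card V = (\<Sum>i\<le>k. 2 ^ i) + 3"

end

theory Submission
  imports Defs
begin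

text \<open>
  By the Moore-type count, every vertex of a diregular (2,k,+3)-digraph has exactly three
  outliers. With N+(u) = {u1, u2}, the vertices other than u split into the (k-1)-balls
  around u1 and u2 and the outlier set O(u).

  If v1 is not in O(u), it lies in the ball around u1, and counting the vertices at distance k
  from u1 behind v1 forces N+(v1) into O(u). Neither this nor any other way of having both
  out-neighbours of v1 in O(u) is possible: O(u) would then be N+(v1) plus v or v1, and the
  four vertices at distance 2 from v1 would all be outliers of u2. If no out-neighbour of v1
  is in O(u), the same kind of counting shows N+(v1) = N+(u1); then u1, v1 and their second
  in-neighbours are four vertices from which u2 is an outlier, whereas the converse digraph
  is again a diregular (2,k,+3)-digraph and so allows only three. The claims about v follow
  by exchanging the roles of u and v.
\<close>

fun walk :: "'a set \<Rightarrow> ('a \<Rightarrow> 'a \<Rightarrow> bool) \<Rightarrow> nat \<Rightarrow> 'a \<Rightarrow> 'a \<Rightarrow> bool" where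
  "walk V A 0 x y \<longleftrightarrow> x = y \<and> x \<in> V"
| "walk V A (Suc n) x z \<longleftrightarrow> x \<in> V \<and> (\<exists>y. A x y \<and> walk V A n y z)"

lemma is_path_singleton: "is_path V A [x] x' y \<longleftrightarrow> x' = x \<and> y = x \<and> x \<in> V"
  by (auto simp: is_path_def)

lemma is_path_Cons_Cons:
  "is_path V A (x # a # q) x' y \<longleftrightarrow> x' = x \<and> x \<in> V \<and> A x a \<and> is_path V A (a # q) a y"
proof
  assume h: "is_path V A (x # a # q) x' y"
  have "A ((x # a # q) ! 0) ((x # a # q) ! Suc 0)"
    using h unfolding is_path_def by (metis length_Cons zero_less_Suc Suc_less_eq)
  moreover have "A ((a # q) ! i) ((a # q) ! Suc i)" if "Suc i < length (a # q)" for i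
    using h that unfolding is_path_def by fastforce
  ultimately show "x' = x \<and> x \<in> V \<and> A x a \<and> is_path V A (a # q) a y"
    using h unfolding is_path_def by auto
next
  assume h: "x' = x \<and> x \<in> V \<and> A x a \<and> is_path V A (a # q) a y"
  show "is_path V A (x # a # q) x' y" unfolding is_path_def
  proof (intro conjI allI impI)
    fix i assume i: "Suc i < length (x # a # q)"
    show "A ((x # a # q) ! i) ((x # a # q) ! Suc i)"
    proof (cases i)
      case 0 then show ?thesis using h by simp
    next
      case (Suc j)
      then have "Suc j < length (a # q)" using i by simp
      then show ?thesis using h Suc unfolding is_path_def by simp
    qed
  qed (use h in \<open>auto simp: is_path_def\<close>)
qed

lemma is_path_snoc:
  "is_path V A p x a \<Longrightarrow> A a y \<Longrightarrow> y \<in> V \<Longrightarrow> is_path V A (p @ [y]) x y"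
proof (induction p arbitrary: x)
  case Nil then show ?case by (simp add: is_path_def)
next
  case (Cons b p)
  show ?case
  proof (cases p)
    case Nil then show ?thesis using Cons.prems by (auto simp: is_path_singleton is_path_Cons_Cons)
  next
    case (Cons c q)
    then show ?thesis using Cons.IH Cons.prems by (auto simp: is_path_Cons_Cons)
  qed
qed

lemma walk_if_is_path: "is_path V A p x y \<Longrightarrow> walk V A (path_len p) x y"
proof (induction p arbitrary: x)
  case Nil then show ?case by (simp add: is_path_def)
next
  case (Cons a p)
  show ?case
  proof (cases p)
    case Nil then show ?thesis using Cons.prems by (auto simp: is_path_singleton path_len_def)
  next
    case (Cons b q)
    then show ?thesis using Cons.IH Cons.prems by (auto simp: is_path_Cons_Cons path_len_def)
  qed
qed

lemma is_path_if_walk: "walk V A n x y \<Longrightarrow> \<exists>p. is_path V A p x y \<and> path_len p = n"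
proof (induction n arbitrary: x)
  case 0 then show ?case by (intro exI[of _ "[x]"]) (auto simp: is_path_singleton path_len_def)
next
  case (Suc n)
  from Suc.prems obtain a where "x \<in> V" "A x a" "walk V A n a y" by auto
  moreover from this(3) Suc.IH obtain p where "is_path V A p a y" "path_len p = n" by blast
  moreover from this(1) obtain q where "p = a # q" unfolding is_path_def by (cases p) auto
  ultimately show ?case
    by (intro exI[of _ "x # p"]) (auto simp: is_path_Cons_Cons path_len_def)
qed

lemma walk_in_V: "walk V A n x y \<Longrightarrow> x \<in> V \<and> y \<in> V"
  by (induction n arbitrary: x) auto

lemma walk_trans: "walk V A m x y \<Longrightarrow> walk V A n y z \<Longrightarrow> walk V A (m + n) x z"
  by (induction m arbitrary: x) auto

lemma walk_Suc_snoc: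
  assumes "\<And>x y. A x y \<Longrightarrow> x \<in> V \<and> y \<in> V"
  shows "walk V A (Suc n) x z \<longleftrightarrow> (\<exists>y. walk V A n x y \<and> A y z)"
  by (induction n arbitrary: x) (use assms in auto)

lemma walk_converse:
  assumes "\<And>x y. A x y \<Longrightarrow> x \<in> V \<and> y \<in> V"
  shows "walk V (\<lambda>x y. A y x) n x y \<longleftrightarrow> walk V A n y x"
proof (induction n arbitrary: x y)
  case (Suc n)
  then show ?case using walk_Suc_snoc[of A V, OF assms] assms by auto
qed auto

lemma outlier_set_iff_no_walk:
  "y \<in> outlier_set V A k x \<longleftrightarrow> y \<in> V \<and> \<not> (\<exists>i\<le>k. walk V A i x y)"
proof (cases "\<exists>p. is_path V A p x y")
  case False
  then have "dist V A x y = \<infinity>" by (simp add: dist_def)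
  then show ?thesis using False is_path_if_walk by (fastforce simp: outlier_set_def)
next
  case True
  define L where "L = (LEAST n. \<exists>p. is_path V A p x y \<and> path_len p = n)"
  have dist: "dist V A x y = enat L" using True by (simp add: dist_def L_def)
  have "\<exists>p. is_path V A p x y \<and> path_len p = L"
    unfolding L_def by (rule LeastI_ex) (use True in blast)
  then have walk_L: "walk V A L x y" by (metis walk_if_is_path)
  have L_least: "L \<le> i" if "walk V A i x y" for i
    unfolding L_def by (rule Least_le) (use is_path_if_walk[OF that] in blast)
  have "enat (k + 1) \<le> dist V A x y \<longleftrightarrow> k < L" by (simp add: dist Suc_le_eq)
  also have "\<dots> \<longleftrightarrow> \<not> (\<exists>i\<le>k. walk V A i x y)"
    using walk_L L_least by (meson le_trans not_le)
  finally show ?thesis by (simp add: outlier_set_def)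
qed

lemma k_geodetic_walk_length_unique:
  assumes "k_geodetic V A k" "walk V A m x y" "walk V A n x y" "m \<le> k" "n \<le> k"
  shows "m = n"
proof -
  obtain p where p: "is_path V A p x y" "path_len p = m" using is_path_if_walk[OF assms(2)] by blast
  obtain q where q: "is_path V A q x y" "path_len q = n" using is_path_if_walk[OF assms(3)] by blast
  have "p = q"
    using assms(1,4,5) p q walk_in_V[OF assms(2)] unfolding k_geodetic_def by blast
  then show ?thesis using p q by simp
qed

lemma k_geodetic_first_arc_unique:
  assumes "k_geodetic V A k" "x \<in> V" "A x a" "A x b" "walk V A m a y" "walk V A n b y"
    and "m < k" "n < k"
  shows "a = b"
proof -
  obtain p where p: "is_path V A p a y" "path_len p = m" using is_path_if_walk[OF assms(5)] by blast
  obtain q where q: "is_path V A q b y" "path_len q = n" using is_path_if_walk[OF assms(6)] by blast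
  obtain p' q' where pq: "p = a # p'" "q = b # q'"
    using p(1) q(1) unfolding is_path_def by (cases p; cases q) auto
  have "y \<in> V" using assms(5) walk_in_V by fast
  have "is_path V A (x # p) x y" "is_path V A (x # q) x y"
    using p(1) q(1) pq assms(2-4) by (simp_all add: is_path_Cons_Cons)
  moreover have "path_len (x # p) \<le> k" "path_len (x # q) \<le> k"
    using p(2) q(2) pq assms(7,8) by (simp_all add: path_len_def)
  ultimately have "x # p = x # q"
    using assms(1,2) \<open>y \<in> V\<close> unfolding k_geodetic_def by blast
  then show ?thesis using pq by simp
qed

lemma k_geodetic_last_arc_unique:
  assumes "k_geodetic V A k" "y \<in> V" "A a y" "A b y" "walk V A m x a" "walk V A n x b"
    and "m < k" "n < k"
  shows "a = b"
proof -
  obtain p where p: "is_path V A p x a" "path_len p = m" using is_path_if_walk[OF assms(5)] by blast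
  obtain q where q: "is_path V A q x b" "path_len q = n" using is_path_if_walk[OF assms(6)] by blast
  have "x \<in> V" using assms(5) walk_in_V by fast
  have "is_path V A (p @ [y]) x y" "is_path V A (q @ [y]) x y"
    using p(1) q(1) assms(2-4) by (simp_all add: is_path_snoc)
  moreover have "path_len (p @ [y]) \<le> k" "path_len (q @ [y]) \<le> k"
    using p q assms(7,8) by (auto simp: path_len_def is_path_def)
  ultimately have "p @ [y] = q @ [y]"
    using assms(1,2) \<open>x \<in> V\<close> unfolding k_geodetic_def by blast
  then show ?thesis using p(1) q(1) by (simp add: is_path_def)
qed

lemma mem_out_nbrs [simp]: "y \<in> out_nbrs A x \<longleftrightarrow> A x y"
  by (simp add: out_nbrs_def)

lemma mem_in_nbrs [simp]: "y \<in> in_nbrs A x \<longleftrightarrow> A y x"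
  by (simp add: in_nbrs_def)

text \<open>k-geodecity enters only through these three consequences for walks; unlike the
  formulation by paths they are plainly invariant under reversing all arcs.\<close>

locale digraph_2k3 =
  fixes V :: "'a set" and A :: "'a \<Rightarrow> 'a \<Rightarrow> bool" and k :: nat
  assumes finite_V: "finite V"
    and arc_in_V: "A x y \<Longrightarrow> x \<in> V \<and> y \<in> V"
    and card_out_nbrs: "x \<in> V \<Longrightarrow> card (out_nbrs A x) = 2"
    and card_in_nbrs: "x \<in> V \<Longrightarrow> card (in_nbrs A x) = 2"
    and card_V: "card V = (\<Sum>i\<le>k. 2 ^ i) + 3"
    and walk_length_unique:
      "walk V A m x y \<Longrightarrow> walk V A n x y \<Longrightarrow> m \<le> k \<Longrightarrow> n \<le> k \<Longrightarrow> m = n"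
    and first_arc_unique:
      "A x a \<Longrightarrow> A x b \<Longrightarrow> walk V A m a y \<Longrightarrow> walk V A n b y \<Longrightarrow> m < k \<Longrightarrow> n < k \<Longrightarrow> a = b"
    and last_arc_unique:
      "A a y \<Longrightarrow> A b y \<Longrightarrow> walk V A m x a \<Longrightarrow> walk V A n x b \<Longrightarrow> m < k \<Longrightarrow> n < k \<Longrightarrow> a = b"

lemma digraph_2k3_if_diregular_2k3:
  assumes "diregular_2k3 V A k"
  shows "digraph_2k3 V A k"
proof -
  note dir = assms[unfolded diregular_2k3_def]
  have arcs: "\<And>x y. A x y \<Longrightarrow> x \<in> V \<and> y \<in> V" and geo: "k_geodetic V A k"
    using dir by blast+
  show ?thesis
  proof
    show "walk V A m x y \<Longrightarrow> walk V A n x y \<Longrightarrow> m \<le> k \<Longrightarrow> n \<le> k \<Longrightarrow> m = n" for m n x y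
      using k_geodetic_walk_length_unique[OF geo] by blast
    show "A x a \<Longrightarrow> A x b \<Longrightarrow> walk V A m a y \<Longrightarrow> walk V A n b y \<Longrightarrow> m < k \<Longrightarrow> n < k \<Longrightarrow> a = b"
      for x a b m n y
      using k_geodetic_first_arc_unique[OF geo] arcs by blast
    show "A a y \<Longrightarrow> A b y \<Longrightarrow> walk V A m x a \<Longrightarrow> walk V A n x b \<Longrightarrow> m < k \<Longrightarrow> n < k \<Longrightarrow> a = b"
      for x a b m n y
      using k_geodetic_last_arc_unique[OF geo] arcs by blast
  qed (use dir in blast)+
qed

context digraph_2k3
begin

abbreviation outliers :: "'a \<Rightarrow> 'a set" where
  "outliers x \<equiv> outlier_set V A k x"

definition out_ball :: "nat \<Rightarrow> 'a \<Rightarrow> 'a set" where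
  "out_ball j x = {y. \<exists>i\<le>j. walk V A i x y}"

lemma mem_out_ball: "y \<in> out_ball j x \<longleftrightarrow> (\<exists>i\<le>j. walk V A i x y)"
  by (simp add: out_ball_def)

lemma mem_outliers: "y \<in> outliers x \<longleftrightarrow> y \<in> V \<and> y \<notin> out_ball k x"
  by (simp add: outlier_set_iff_no_walk mem_out_ball)

lemma walk_one [simp]: "walk V A (Suc 0) x y \<longleftrightarrow> A x y"
  using arc_in_V by auto

lemma arc_walk: "A x y \<Longrightarrow> walk V A (Suc 0) x y"
  using walk_one by blast

lemma walk_Cons: "A x y \<Longrightarrow> walk V A n y z \<Longrightarrow> walk V A (Suc n) x z"
  using arc_in_V by auto

lemma walk_Suc_snoc_iff: "walk V A (Suc n) x z \<longleftrightarrow> (\<exists>y. walk V A n x y \<and> A y z)"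
  using walk_Suc_snoc[of A V, OF arc_in_V] by blast

lemma walk_snoc: "walk V A n x y \<Longrightarrow> A y z \<Longrightarrow> walk V A (Suc n) x z"
  using walk_Suc_snoc_iff by blast

lemma no_short_cycle: "walk V A n x x \<Longrightarrow> 0 < n \<Longrightarrow> n \<le> k \<Longrightarrow> False"
  using walk_length_unique[of n x x 0] walk_in_V[of V A n x x] by auto

lemma no_loop: "0 < k \<Longrightarrow> \<not> A x x"
  using no_short_cycle[OF arc_walk] by fastforce

lemma finite_out_nbrs: "finite (out_nbrs A x)"
  by (rule finite_subset[OF _ finite_V]) (use arc_in_V in auto)

lemma finite_layer: "finite {y. walk V A j x y}"
  by (rule finite_subset[OF _ finite_V]) (use walk_in_V in fast)

lemma in_nbrs_eq: "A a y \<Longrightarrow> A b y \<Longrightarrow> a \<noteq> b \<Longrightarrow> in_nbrs A y = {a, b}"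
  using card_in_nbrs[of y] arc_in_V finite_subset[OF _ finite_V, of "in_nbrs A y"]
  by (intro card_subset_eq[symmetric]) (auto simp: in_nbrs_def)

lemma card_layer: "j \<le> k \<Longrightarrow> x \<in> V \<Longrightarrow> card {y. walk V A j x y} = 2 ^ j"
proof (induction j arbitrary: x)
  case 0
  then have "{y. walk V A 0 x y} = {x}" by auto
  then show ?case by simp
next
  case (Suc j)
  have "{y. walk V A (Suc j) x y} = (\<Union>a\<in>out_nbrs A x. {y. walk V A j a y})"
    using Suc.prems by auto
  also have "card \<dots> = (\<Sum>a\<in>out_nbrs A x. card {y. walk V A j a y})"
  proof (rule card_UN_disjoint)
    show "\<forall>a\<in>out_nbrs A x. \<forall>b\<in>out_nbrs A x. a \<noteq> b \<longrightarrow>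
        {y. walk V A j a y} \<inter> {y. walk V A j b y} = {}"
      using first_arc_unique Suc.prems by fastforce
  qed (simp_all add: finite_out_nbrs finite_layer)
  also have "\<dots> = (\<Sum>a\<in>out_nbrs A x. 2 ^ j)"
    using Suc.IH Suc.prems arc_in_V by (intro sum.cong) auto
  also have "\<dots> = 2 ^ Suc j" using card_out_nbrs[OF Suc.prems(2)] by simp
  finally show ?case .
qed

lemma card_out_ball: "x \<in> V \<Longrightarrow> card (out_ball k x) = (\<Sum>i\<le>k. 2 ^ i)"
proof -
  assume "x \<in> V"
  have "out_ball k x = (\<Union>i\<le>k. {y. walk V A i x y})" by (auto simp: out_ball_def)
  also have "card \<dots> = (\<Sum>i\<le>k. card {y. walk V A i x y})"
    by (rule card_UN_disjoint) (use finite_layer walk_length_unique in auto)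
  also have "\<dots> = (\<Sum>i\<le>k. 2 ^ i)" using card_layer \<open>x \<in> V\<close> by simp
  finally show ?thesis .
qed

lemma card_outliers: "x \<in> V \<Longrightarrow> card (outliers x) = 3"
proof -
  assume "x \<in> V"
  have "outliers x = V - out_ball k x" by (auto simp: mem_outliers)
  moreover have "out_ball k x \<subseteq> V" using walk_in_V by (fastforce simp: out_ball_def)
  ultimately show ?thesis
    using card_Diff_subset[of "out_ball k x" V] card_out_ball[OF \<open>x \<in> V\<close>] card_V finite_V
    by (simp add: finite_subset)
qed

lemma finite_outliers: "finite (outliers x)"
  using finite_V by (simp add: outlier_set_def)


lemma out_balls_disjoint:
  "A x a \<Longrightarrow> A x b \<Longrightarrow> a \<noteq> b \<Longrightarrow> 0 < k \<Longrightarrow> y \<in> out_ball (k - 1) a \<Longrightarrow> y \<notin> out_ball (k - 1) b"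
  using first_arc_unique by (fastforce simp: mem_out_ball)

lemma tail_notin_out_ball:
  assumes "A x a" "0 < k"
  shows "x \<notin> out_ball (k - 1) a"
proof
  assume "x \<in> out_ball (k - 1) a"
  then obtain i where "i \<le> k - 1" "walk V A i a x" by (auto simp: mem_out_ball)
  then show False using no_short_cycle[OF walk_Cons[OF assms(1)]] assms(2) by fastforce
qed

lemma mem_outliers_via_out_nbrs:
  assumes "out_nbrs A x = {a, b}" "0 < k"
  shows "y \<in> outliers x \<longleftrightarrow> y \<in> V \<and> y \<noteq> x \<and> y \<notin> out_ball (k - 1) a \<and> y \<notin> out_ball (k - 1) b"
proof -
  have step: "walk V A (Suc i) x y \<longleftrightarrow> x \<in> V \<and> (walk V A i a y \<or> walk V A i b y)" for i
    using assms(1) by (auto simp: set_eq_iff)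
  have "(\<exists>i\<le>k. walk V A i x y) \<longleftrightarrow> walk V A 0 x y \<or> (\<exists>i<k. walk V A (Suc i) x y)"
    using Ex_less_Suc2[of k "\<lambda>i. walk V A i x y"] by (simp add: less_Suc_eq_le)
  also have "\<dots> \<longleftrightarrow> x \<in> V \<and> (y = x \<or> y \<in> out_ball (k - 1) a \<or> y \<in> out_ball (k - 1) b)"
    unfolding step mem_out_ball using assms(2) by (auto simp: less_Suc_eq_le[symmetric])
  moreover have "x \<in> V" using assms(1) arc_in_V[of x a] by (auto simp: set_eq_iff)
  ultimately show ?thesis by (auto simp: outlier_set_iff_no_walk)
qed

lemma in_nbr_in_out_ball: "A x a \<Longrightarrow> y \<in> out_ball j a \<Longrightarrow> \<exists>e. A e y \<and> (e = x \<or> e \<in> out_ball j a)"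
proof -
  assume "A x a" "y \<in> out_ball j a"
  then obtain i where i: "i \<le> j" "walk V A i a y" by (auto simp: mem_out_ball)
  show ?thesis
  proof (cases i)
    case 0
    then show ?thesis using i \<open>A x a\<close> by auto
  next
    case (Suc i')
    then obtain e where "walk V A i' a e" "A e y" using i(2) walk_Suc_snoc_iff by blast
    then show ?thesis using i(1) Suc by (auto simp: mem_out_ball)
  qed
qed

lemma outlier_if_in_nbrs_far:
  assumes "y \<in> V" "0 < k" "y \<notin> out_ball (k - 1) x" "\<And>e. A e y \<Longrightarrow> e \<notin> out_ball (k - 1) x"
  shows "y \<in> outliers x"
proof -
  have "\<not> walk V A i x y" if "i \<le> k" for i
  proof (cases i)
    case 0
    then show ?thesis using assms(3) by (auto simp: mem_out_ball)
  next
    case (Suc i')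
    show ?thesis
    proof
      assume "walk V A i x y"
      then obtain e where "walk V A i' x e" "A e y" using Suc walk_Suc_snoc_iff by blast
      then show False using assms(4) that Suc by (auto simp: mem_out_ball)
    qed
  qed
  then show ?thesis using assms(1) by (simp add: outlier_set_iff_no_walk)
qed

lemma self_in_out_ball: "x \<in> V \<Longrightarrow> x \<in> out_ball j x"
  unfolding mem_out_ball by (intro exI[of _ 0]) simp

lemma other_in_nbr:
  assumes "A a y"
  obtains b where "A b y" "b \<noteq> a"
proof -
  obtain p q where "p \<noteq> q" "in_nbrs A y = {p, q}"
    using card_in_nbrs[of y] arc_in_V[OF assms] by (auto simp: card_2_iff)
  then show ?thesis using that[of p] that[of q] by (auto simp: set_eq_iff)
qed

lemma other_out_nbr:
  assumes "A x a"
  obtains b where "b \<noteq> a" "out_nbrs A x = {b, a}"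
proof -
  obtain p q where "p \<noteq> q" "out_nbrs A x = {p, q}"
    using card_out_nbrs[of x] arc_in_V[OF assms] by (auto simp: card_2_iff)
  moreover have "a = p \<or> a = q" using calculation assms by (auto simp: set_eq_iff)
  ultimately show ?thesis using that[of p] that[of q] by (auto simp: insert_commute)
qed

lemma outliers_eq_insert_out_nbrs:
  assumes "y \<in> V" "z \<in> V" "out_nbrs A z \<subseteq> outliers y" "x \<in> outliers y" "x \<notin> out_nbrs A z"
  shows "outliers y = insert x (out_nbrs A z)"
proof (rule card_subset_eq[symmetric])
  show "card (insert x (out_nbrs A z)) = card (outliers y)"
    using assms card_out_nbrs card_outliers finite_out_nbrs by simp
qed (use assms finite_outliers in auto)

lemma outlier_converse: "y \<in> outliers x \<Longrightarrow> x \<in> V \<Longrightarrow> x \<in> outlier_set V (\<lambda>x y. A y x) k y"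
  using walk_converse[of A V] arc_in_V by (simp add: outlier_set_iff_no_walk)

end

lemma digraph_2k3_converse:
  assumes "digraph_2k3 V A k"
  shows "digraph_2k3 V (\<lambda>x y. A y x) k"
proof -
  interpret digraph_2k3 V A k by (rule assms)
  have converse: "walk V (\<lambda>x y. A y x) n x y \<longleftrightarrow> walk V A n y x" for n x y
    using walk_converse[of A V] arc_in_V by blast
  show ?thesis
  proof
    show "walk V (\<lambda>x y. A y x) m x y \<Longrightarrow> walk V (\<lambda>x y. A y x) n x y \<Longrightarrow> m \<le> k \<Longrightarrow> n \<le> k
        \<Longrightarrow> m = n" for m n x y
      unfolding converse by (rule walk_length_unique)
    show "A a x \<Longrightarrow> A b x \<Longrightarrow> walk V (\<lambda>x y. A y x) m a y \<Longrightarrow> walk V (\<lambda>x y. A y x) n b y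
        \<Longrightarrow> m < k \<Longrightarrow> n < k \<Longrightarrow> a = b" for x a b m n y
      unfolding converse by (rule last_arc_unique)
    show "A y a \<Longrightarrow> A y b \<Longrightarrow> walk V (\<lambda>x y. A y x) m x a \<Longrightarrow> walk V (\<lambda>x y. A y x) n x b
        \<Longrightarrow> m < k \<Longrightarrow> n < k \<Longrightarrow> a = b" for x a b m n y
      unfolding converse by (rule first_arc_unique)
  qed (use arc_in_V card_in_nbrs card_out_nbrs finite_V card_V in
        \<open>simp_all add: in_nbrs_def out_nbrs_def\<close>)
qed

locale common_out_nbr = digraph_2k3 +
  fixes u v u1 u2 v1 :: 'a
  assumes k_ge_4: "4 \<le> k"
    and u_in_V: "u \<in> V" and v_in_V: "v \<in> V" and u_ne_v: "u \<noteq> v"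
    and out_nbrs_u: "out_nbrs A u = {u1, u2}"
    and out_nbrs_v: "out_nbrs A v = {v1, u2}"
    and u1_ne_v1: "u1 \<noteq> v1"
begin

lemma common_out_nbr_swap: "common_out_nbr V A k v u v1 u2 u1"
  by unfold_locales (use k_ge_4 u_in_V v_in_V u_ne_v out_nbrs_u out_nbrs_v u1_ne_v1 in auto)

lemma arcs: "A u u1" "A u u2" "A v v1" "A v u2"
  using out_nbrs_u out_nbrs_v by (auto simp: set_eq_iff)

lemma in_V: "u1 \<in> V" "u2 \<in> V" "v1 \<in> V"
  using arcs arc_in_V by blast+

lemma u1_ne_u2: "u1 \<noteq> u2"
  using card_out_nbrs[OF u_in_V] out_nbrs_u by auto

lemma v1_ne_u2: "v1 \<noteq> u2"
  using card_out_nbrs[OF v_in_V] out_nbrs_v by auto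

lemma in_nbrs_u2: "A e u2 \<Longrightarrow> e = u \<or> e = v"
  using in_nbrs_eq[OF arcs(2,4) u_ne_v] by (auto simp: set_eq_iff)

lemma mem_outliers_u:
  "y \<in> outliers u \<longleftrightarrow> y \<in> V \<and> y \<noteq> u \<and> y \<notin> out_ball (k - 1) u1 \<and> y \<notin> out_ball (k - 1) u2"
  using mem_outliers_via_out_nbrs[OF out_nbrs_u] k_ge_4 by simp

lemma out_ball_u1_u2_disjoint: "y \<in> out_ball (k - 1) u1 \<Longrightarrow> y \<notin> out_ball (k - 1) u2"
  using out_balls_disjoint[OF arcs(1,2) u1_ne_u2] k_ge_4 by simp

lemma out_ball_v1_u2_disjoint: "y \<in> out_ball (k - 1) v1 \<Longrightarrow> y \<notin> out_ball (k - 1) u2"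
  using out_balls_disjoint[OF arcs(3,4) v1_ne_u2] k_ge_4 by simp

lemma walk_from_v1_not_in_out_ball_u2:
  assumes "walk V A i v1 y" "i < k"
  shows "y \<notin> out_ball (k - 1) u2"
proof -
  have "y \<in> out_ball (k - 1) v1" unfolding mem_out_ball using assms by (intro exI[of _ i]) simp
  then show ?thesis by (rule out_ball_v1_u2_disjoint)
qed

text \<open>The two in-neighbours of y are x and a vertex that is u or near u1; neither is within
  distance k - 1 of u2.\<close>
lemma u2_outlier_if_in_nbr_outlier:
  assumes "y \<in> out_ball (k - 1) u1" "A x y" "x \<in> outliers u"
  shows "y \<in> outliers u2"
proof (rule outlier_if_in_nbrs_far)
  obtain e where e: "A e y" "e = u \<or> e \<in> out_ball (k - 1) u1"
    using in_nbr_in_out_ball[OF arcs(1) assms(1)] by blast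
  have "x \<noteq> e" using e assms(3) by (auto simp: mem_outliers_u)
  then have "in_nbrs A y = {x, e}" using in_nbrs_eq[OF assms(2) e(1)] by simp
  moreover have "e \<notin> out_ball (k - 1) u2"
    using e tail_notin_out_ball[OF arcs(2)] out_ball_u1_u2_disjoint k_ge_4 by auto
  ultimately show "e' \<notin> out_ball (k - 1) u2" if "A e' y" for e'
    using that assms(3) by (auto simp: mem_outliers_u set_eq_iff)
qed (use assms(2) arc_in_V out_ball_u1_u2_disjoint[OF assms(1)] k_ge_4 in auto)

lemma v1_ne_u: "v1 \<noteq> u"
proof
  assume "v1 = u"
  then have "walk V A (Suc (Suc 0)) v u2" using arcs in_V u_in_V v_in_V by fastforce
  moreover have "walk V A (Suc 0) v u2" using arc_walk arcs(4) by blast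
  ultimately show False using walk_length_unique k_ge_4 by fastforce
qed

lemma v1_near_u1_if_not_outlier:
  assumes "v1 \<notin> outliers u"
  obtains s where "s \<le> k - 1" "walk V A s u1 v1"
proof -
  have "v1 \<notin> out_ball (k - 1) u2"
    using walk_from_v1_not_in_out_ball_u2[of 0] in_V k_ge_4 by simp
  then show ?thesis
    using that assms v1_ne_u in_V by (auto simp: mem_outliers_u mem_out_ball)
qed

lemma v_or_v1_outlier: "v \<in> outliers u \<or> v1 \<in> outliers u"
proof (rule disjCI)
  assume "v1 \<notin> outliers u"
  then obtain s where s: "s \<le> k - 1" "walk V A s u1 v1" by (rule v1_near_u1_if_not_outlier)
  have "v \<notin> out_ball (k - 1) u1"
  proof
    assume "v \<in> out_ball (k - 1) u1"
    then obtain a where a: "a \<le> k - 1" "walk V A a u1 v" by (auto simp: mem_out_ball)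
    show False
    proof (cases "a + 2 \<le> k")
      case True
      have "walk V A (Suc (Suc a)) u u2"
        using walk_Cons[OF arcs(1) walk_snoc[OF a(2) arcs(4)]] .
      moreover have "walk V A (Suc 0) u u2" using arc_walk arcs(2) by blast
      ultimately show False using walk_length_unique True by fastforce
    next
      case False
      have "walk V A (Suc a) u1 v1" using walk_snoc[OF a(2) arcs(3)] .
      then have "Suc a = s"
        by (rule walk_length_unique[OF _ s(2)]) (use s(1) a(1) k_ge_4 in simp_all)
      then show False using s(1) False by simp
    qed
  qed
  then show "v \<in> outliers u"
    using tail_notin_out_ball[OF arcs(4)] v_in_V u_ne_v k_ge_4 by (auto simp: mem_outliers_u)
qed

lemma k_walk_from_u1_ends_in_outliers:
  assumes "walk V A s u1 z" "walk V A t v1 z" "t < s" "s < k" "walk V A (k - s) z d"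
  shows "d \<in> outliers u - {v, v1} \<or> (d = u \<and> s \<le> t + 1)"
proof -
  have from_v1: "walk V A (t + (k - s)) v1 d" using walk_trans[OF assms(2,5)] .
  have from_v: "walk V A (Suc (t + (k - s))) v d" using walk_Cons[OF arcs(3) from_v1] .
  have "d \<notin> out_ball (k - 1) u1"
  proof
    assume "d \<in> out_ball (k - 1) u1"
    then obtain i where "i \<le> k - 1" "walk V A i u1 d" by (auto simp: mem_out_ball)
    moreover have "walk V A (s + (k - s)) u1 d" using walk_trans[OF assms(1,5)] .
    ultimately show False using walk_length_unique assms(4) k_ge_4 by fastforce
  qed
  moreover have "d \<notin> out_ball (k - 1) u2"
    using walk_from_v1_not_in_out_ball_u2[OF from_v1] assms(3,4) by simp
  moreover have "d \<noteq> v" using no_short_cycle from_v assms(3,4) by fastforce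
  moreover have "d \<noteq> v1" using no_short_cycle from_v1 assms(3,4) by fastforce
  moreover have "s \<le> t + 1" if "d = u"
  proof (rule ccontr)
    assume "\<not> s \<le> t + 1"
    have "walk V A (Suc (Suc (t + (k - s)))) v u2"
      using walk_snoc[OF from_v[unfolded that] arcs(2)] by simp
    moreover have "walk V A (Suc 0) v u2" using arc_walk arcs(4) by blast
    ultimately show False using walk_length_unique \<open>\<not> s \<le> t + 1\<close> assms(4) by fastforce
  qed
  ultimately show ?thesis using walk_in_V[OF assms(5)] by (auto simp: mem_outliers_u)
qed

lemma card_outliers_u_minus_v_v1: "card (outliers u - {v, v1}) \<le> 2"
proof -
  obtain x where "x \<in> {v, v1}" "x \<in> outliers u" using v_or_v1_outlier by blast
  then have "card (outliers u - {v, v1}) \<le> card (outliers u - {x})"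
    by (intro card_mono) (auto simp: finite_outliers)
  also have "\<dots> = 2" using card_outliers[OF u_in_V] \<open>x \<in> outliers u\<close> by (simp add: finite_outliers)
  finally show ?thesis .
qed

text \<open>The 2 ^ (k - s) vertices at distance k - s from z lie in a set of at most three
  elements, so k - s = 1.\<close>

lemma out_nbrs_in_outliers_if_near_u1_and_v1:
  assumes "walk V A s u1 z" "walk V A t v1 z" "t < s" "s < k" "t \<le> 1"
  shows "s = k - 1" "out_nbrs A z \<subseteq> outliers u - {v, v1}"
proof -
  define L where "L = {d. walk V A (k - s) z d}"
  have card_L: "card L = 2 ^ (k - s)"
    unfolding L_def using card_layer walk_in_V[OF assms(1)] by simp
  have "L \<subseteq> insert u (outliers u - {v, v1})"
    using k_walk_from_u1_ends_in_outliers[OF assms(1-4)] by (auto simp: L_def)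
  then have "card L \<le> card (insert u (outliers u - {v, v1}))"
    by (intro card_mono) (simp_all add: finite_outliers)
  also have "\<dots> \<le> Suc (card (outliers u - {v, v1}))"
    by (simp add: card_insert_if finite_outliers)
  finally have "card L \<le> 3" using card_outliers_u_minus_v_v1 by simp
  then have "k - s \<le> 1"
    using card_L power_increasing[of 2 "k - s" "2::nat"] by (cases "k - s \<le> 1") auto
  then show "s = k - 1" using assms(4) by simp
  then have "\<not> s \<le> t + 1" using assms(5) k_ge_4 by simp
  then have "L \<subseteq> outliers u - {v, v1}"
    unfolding L_def using k_walk_from_u1_ends_in_outliers[OF assms(1-4)] by blast
  moreover have "L = out_nbrs A z"
    using \<open>s = k - 1\<close> assms(4) walk_in_V[OF assms(1)] arc_in_V by (auto simp: L_def)
  ultimately show "out_nbrs A z \<subseteq> outliers u - {v, v1}" by simp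
qed

lemma no_short_walk_from_v1_to_v_or_v1:
  assumes "walk V A n v1 x" "x \<in> {v, v1}" "0 < n" "n < k"
  shows False
proof (cases "x = v1")
  case True
  then show False using no_short_cycle assms by fastforce
next
  case False
  then have "walk V A (Suc n) v v" using assms walk_Cons[OF arcs(3)] by auto
  then show False using no_short_cycle assms(4) by fastforce
qed

lemma layer2_in_outliers_u2:
  assumes "walk V A t v1 z" "t \<le> 1" "x \<in> {v, v1}" "outliers u = insert x (out_nbrs A z)"
    and "walk V A (Suc (Suc 0)) z g" "g \<noteq> u"
  shows "g \<in> outliers u2"
proof -
  obtain c where c: "A z c" "A c g" using assms(5) by auto
  have from_v1: "walk V A (t + Suc (Suc 0)) v1 g" using walk_trans[OF assms(1,5)] .
  have "g \<noteq> x"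
    using no_short_walk_from_v1_to_v_or_v1[OF from_v1] assms(2,3) k_ge_4 by auto
  moreover have "\<not> A z g"
  proof
    assume "A z g"
    from walk_length_unique[OF arc_walk[OF this] assms(5)] show False using k_ge_4 by simp
  qed
  ultimately have "g \<notin> outliers u" using assms(4) by auto
  moreover have "g \<notin> out_ball (k - 1) u2"
    using walk_from_v1_not_in_out_ball_u2[OF from_v1] assms(2) k_ge_4 by simp
  ultimately have "g \<in> out_ball (k - 1) u1"
    using walk_in_V[OF assms(5)] assms(6) by (auto simp: mem_outliers_u)
  moreover have "c \<in> outliers u" using assms(4) c(1) by auto
  ultimately show ?thesis using u2_outlier_if_in_nbr_outlier c(2) by blast
qed

lemma out_nbrs_v1_not_subset_outliers: "\<not> out_nbrs A v1 \<subseteq> outliers u"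
proof
  assume sub: "out_nbrs A v1 \<subseteq> outliers u"
  obtain x where x: "x \<in> {v, v1}" "x \<in> outliers u" using v_or_v1_outlier by blast
  have "\<not> A v1 x"
  proof
    assume "A v1 x"
    from no_short_walk_from_v1_to_v_or_v1[OF arc_walk[OF this] x(1)] show False
      using k_ge_4 by simp
  qed
  then have outliers_u: "outliers u = insert x (out_nbrs A v1)"
    using outliers_eq_insert_out_nbrs u_in_V in_V(3) sub x(2) by simp
  have "g \<noteq> u" if "walk V A (Suc (Suc 0)) v1 g" for g
  proof
    assume "g = u"
    have "walk V A (Suc (Suc (Suc (Suc 0)))) v u2"
      using walk_Cons[OF arcs(3) walk_snoc[OF that[unfolded \<open>g = u\<close>] arcs(2)]] .
    from walk_length_unique[OF this arc_walk[OF arcs(4)]] show False using k_ge_4 by simp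
  qed
  then have "{g. walk V A (Suc (Suc 0)) v1 g} \<subseteq> outliers u2"
    using layer2_in_outliers_u2[of 0 v1 x] x(1) outliers_u in_V(3) by auto
  then have "card {g. walk V A (Suc (Suc 0)) v1 g} \<le> card (outliers u2)"
    by (intro card_mono) (simp_all add: finite_outliers)
  then show False using card_layer[of "Suc (Suc 0)" v1] card_outliers[OF in_V(2)] in_V(3) k_ge_4 by simp
qed

lemma v1_outlier: "v1 \<in> outliers u"
proof (rule ccontr)
  assume "v1 \<notin> outliers u"
  then obtain s where s: "s \<le> k - 1" "walk V A s u1 v1" by (rule v1_near_u1_if_not_outlier)
  have "0 < s" using s(2) u1_ne_v1 by (cases s) auto
  then have "out_nbrs A v1 \<subseteq> outliers u - {v, v1}"
    using out_nbrs_in_outliers_if_near_u1_and_v1(2)[OF s(2), of 0] s(1) in_V k_ge_4 by simp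
  then show False using out_nbrs_v1_not_subset_outliers by blast
qed

lemma out_nbr_v1_near_u1:
  assumes "out_nbrs A v1 \<inter> outliers u = {}" "A v1 c"
  shows "c \<in> out_ball (k - 1) u1"
proof -
  have "c \<noteq> u"
  proof
    assume "c = u"
    have "walk V A (Suc 0) u u2" using arc_walk arcs(2) by blast
    from walk_Cons[OF arcs(3) walk_Cons[OF assms(2)[unfolded \<open>c = u\<close>] this]]
    have "walk V A (Suc (Suc (Suc 0))) v u2" .
    moreover have "walk V A (Suc 0) v u2" using arc_walk arcs(4) by blast
    ultimately show False using walk_length_unique k_ge_4 by fastforce
  qed
  moreover have "c \<notin> out_ball (k - 1) u2"
    using walk_from_v1_not_in_out_ball_u2[OF arc_walk[OF assms(2)]] k_ge_4 by simp
  ultimately show ?thesis using assms arc_in_V by (auto simp: mem_outliers_u)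
qed

lemma out_nbrs_v1_in_outliers_u2:
  assumes "out_nbrs A v1 \<inter> outliers u = {}"
  shows "out_nbrs A v1 \<subseteq> outliers u2"
  using u2_outlier_if_in_nbr_outlier[OF out_nbr_v1_near_u1[OF assms] _ v1_outlier] by auto

lemma out_nbr_v1_is_u1_or_out_nbr_u1:
  assumes "out_nbrs A v1 \<inter> outliers u = {}" "A v1 c"
  shows "c = u1 \<or> A u1 c"
proof (rule ccontr)
  assume "\<not> (c = u1 \<or> A u1 c)"
  obtain s where s: "s \<le> k - 1" "walk V A s u1 c"
    using out_nbr_v1_near_u1[OF assms] by (auto simp: mem_out_ball)
  have "s \<noteq> 0" using s(2) \<open>\<not> (c = u1 \<or> A u1 c)\<close> by (cases s) auto
  moreover have "s \<noteq> Suc 0" using s(2) \<open>\<not> (c = u1 \<or> A u1 c)\<close> walk_one by metis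
  ultimately have out_nbrs_c: "out_nbrs A c \<subseteq> outliers u - {v, v1}"
    using out_nbrs_in_outliers_if_near_u1_and_v1(2)[OF s(2) arc_walk[OF assms(2)]] s(1) k_ge_4 by simp
  have "c \<in> V" using arc_in_V[OF assms(2)] by blast
  have "outliers u = insert v1 (out_nbrs A c)"
    by (rule outliers_eq_insert_out_nbrs[OF u_in_V \<open>c \<in> V\<close> _ v1_outlier]) (use out_nbrs_c in auto)
  then have layer2: "{f. walk V A (Suc (Suc 0)) c f} - {u} \<subseteq> outliers u2"
    using layer2_in_outliers_u2[OF arc_walk[OF assms(2)]] by auto
  have disjoint: "{f. walk V A (Suc (Suc 0)) c f} \<inter> out_nbrs A v1 = {}"
  proof (rule ccontr)
    assume "{f. walk V A (Suc (Suc 0)) c f} \<inter> out_nbrs A v1 \<noteq> {}"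
    then obtain f where "walk V A (Suc (Suc 0)) c f" "A v1 f" unfolding out_nbrs_def by blast
    from walk_length_unique[OF walk_Cons[OF assms(2) this(1)] arc_walk[OF this(2)]]
    show False using k_ge_4 by simp
  qed
  have "3 + 2 \<le> card ({f. walk V A (Suc (Suc 0)) c f} - {u}) + card (out_nbrs A v1)"
    using card_layer[of "Suc (Suc 0)" c] arc_in_V[OF assms(2)] card_out_nbrs[OF in_V(3)] k_ge_4
    by (simp add: card_Diff_singleton_if finite_layer)
  also have "\<dots> = card ({f. walk V A (Suc (Suc 0)) c f} - {u} \<union> out_nbrs A v1)"
    by (rule card_Un_disjoint[OF finite_Diff[OF finite_layer] finite_out_nbrs, symmetric])
      (use disjoint in blast)
  also have "\<dots> \<le> card (outliers u2)"
    by (rule card_mono[OF finite_outliers]) (use layer2 out_nbrs_v1_in_outliers_u2[OF assms(1)] in blast)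
  finally show False using card_outliers[OF in_V(2)] by simp
qed

lemma twin_out_nbrs_if_no_outlier_nbr:
  assumes "out_nbrs A v1 \<inter> outliers u = {}"
  shows "out_nbrs A u1 = out_nbrs A v1"
proof -
  have "\<not> A v1 u1"
  proof
    assume "A v1 u1"
    then obtain c where c: "c \<noteq> u1" "out_nbrs A v1 = {c, u1}" by (rule other_out_nbr)
    then have "A u1 c" using out_nbr_v1_is_u1_or_out_nbr_u1[OF assms, of c] by (auto simp: set_eq_iff)
    then have "walk V A (Suc (Suc 0)) v1 c" using walk_Cons[OF \<open>A v1 u1\<close> arc_walk] by blast
    moreover have "walk V A (Suc 0) v1 c" using c(2) arc_walk by (auto simp: set_eq_iff)
    ultimately show False using walk_length_unique k_ge_4 by fastforce
  qed
  then have "out_nbrs A v1 \<subseteq> out_nbrs A u1"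
    using out_nbr_v1_is_u1_or_out_nbr_u1[OF assms] unfolding out_nbrs_def by blast
  then have "out_nbrs A v1 = out_nbrs A u1"
    using card_out_nbrs in_V finite_out_nbrs by (intro card_subset_eq) auto
  then show ?thesis by simp
qed

lemma u2_outlier_u1_if_twins:
  assumes "out_nbrs A u1 = out_nbrs A v1"
  shows "u2 \<in> outliers u1"
proof (rule outlier_if_in_nbrs_far)
  show "u2 \<notin> out_ball (k - 1) u1"
    using out_ball_u1_u2_disjoint self_in_out_ball[OF in_V(2)] by blast
  have "v \<notin> out_ball (k - 1) u1"
  proof
    assume "v \<in> out_ball (k - 1) u1"
    then obtain a where a: "a \<le> k - 1" "walk V A a u1 v" by (auto simp: mem_out_ball)
    show False
    proof (cases a)
      case 0
      then have "v = u1" using a(2) by simp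
      then have "A v1 u2" using arcs(4) assms by (metis mem_out_nbrs)
      then have "u2 \<in> out_ball (k - 1) v1"
        unfolding mem_out_ball using arc_walk k_ge_4 by (intro exI[of _ "Suc 0"]) simp
      then show False
        using out_ball_v1_u2_disjoint self_in_out_ball[OF in_V(2)] by blast
    next
      case (Suc a')
      then obtain c where c: "A u1 c" "walk V A a' c v" using a(2) by auto
      then have "A v1 c" using assms by (metis mem_out_nbrs)
      from walk_Cons[OF arcs(3) walk_Cons[OF this c(2)]]
      have "walk V A (Suc (Suc a')) v v" .
      then show False using no_short_cycle Suc a(1) k_ge_4 by fastforce
    qed
  qed
  then show "e \<notin> out_ball (k - 1) u1" if "A e u2" for e
    using in_nbrs_u2[OF that] tail_notin_out_ball[OF arcs(1)] k_ge_4 by auto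
qed (use in_V k_ge_4 in auto)

lemma u2_outlier_other_in_nbr_u1:
  assumes "A x u1" "x \<noteq> u"
  shows "u2 \<in> outliers x"
proof -
  obtain m where m: "m \<noteq> u1" "out_nbrs A x = {m, u1}" using other_out_nbr[OF assms(1)] .
  have "m \<noteq> u2"
  proof
    assume "m = u2"
    then have "A x u2" using m(2) by (auto simp: set_eq_iff)
    then have "x = v" using in_nbrs_u2 assms(2) by auto
    then show False using m(2) out_nbrs_v u1_ne_v1 u1_ne_u2 by (auto simp: set_eq_iff)
  qed
  interpret x_config: common_out_nbr V A k x u m u1 u2
    using k_ge_4 arc_in_V assms m out_nbrs_u u_in_V \<open>m \<noteq> u2\<close>
    by unfold_locales (auto simp: insert_commute)
  show ?thesis using x_config.v1_outlier .
qed

lemma card_in_nbrs_of_twins: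
  assumes "out_nbrs A u1 = out_nbrs A v1" "A x u1" "A w v1"
  shows "card {u1, v1, x, w} = 4"
proof -
  obtain c d where "out_nbrs A u1 = {c, d}"
    using card_out_nbrs[OF in_V(1)] by (auto simp: card_2_iff)
  then have "A u1 c" "A v1 c" using assms(1) by (auto simp: set_eq_iff)
  then have "x \<noteq> w"
    using first_arc_unique[OF assms(2) _ arc_walk arc_walk] assms(3) u1_ne_v1 k_ge_4 by auto
  moreover have "x \<noteq> u1" "w \<noteq> v1" "x \<noteq> v1" "w \<noteq> u1"
    using no_loop assms k_ge_4 by (auto simp: set_eq_iff)
  ultimately show ?thesis using u1_ne_v1 by auto
qed

text \<open>Otherwise u2 would have four in-outliers: u1, v1 and their other in-neighbours.\<close>
lemma out_nbrs_v1_meet_outliers: "out_nbrs A v1 \<inter> outliers u \<noteq> {}"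
proof
  assume "out_nbrs A v1 \<inter> outliers u = {}"
  then have twins: "out_nbrs A u1 = out_nbrs A v1" by (rule twin_out_nbrs_if_no_outlier_nbr)
  interpret swapped: common_out_nbr V A k v u v1 u2 u1 by (rule common_out_nbr_swap)
  interpret converse: digraph_2k3 V "\<lambda>x y. A y x" k
    using digraph_2k3_converse digraph_2k3_axioms .
  obtain x where x: "A x u1" "x \<noteq> u" using other_in_nbr[OF arcs(1)] .
  obtain w where w: "A w v1" "w \<noteq> v" using other_in_nbr[OF arcs(3)] .
  have "\<forall>y\<in>{u1, v1, x, w}. u2 \<in> outliers y"
    using u2_outlier_u1_if_twins[OF twins] swapped.u2_outlier_u1_if_twins[OF twins[symmetric]]
      u2_outlier_other_in_nbr_u1[OF x] swapped.u2_outlier_other_in_nbr_u1[OF w]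
    by blast
  moreover have "{u1, v1, x, w} \<subseteq> V" using in_V arc_in_V x(1) w(1) by blast
  ultimately have "{u1, v1, x, w} \<subseteq> outlier_set V (\<lambda>x y. A y x) k u2"
    using outlier_converse by blast
  then have "card {u1, v1, x, w} \<le> card (outlier_set V (\<lambda>x y. A y x) k u2)"
    by (rule card_mono[OF converse.finite_outliers])
  then show False
    using card_in_nbrs_of_twins[OF twins x(1) w(1)] converse.card_outliers[OF in_V(2)] by simp
qed

lemma card_outliers_inter_out_nbrs_v1: "card (outliers u \<inter> out_nbrs A v1) = 1"
proof -
  have "card (outliers u \<inter> out_nbrs A v1) \<noteq> 0"
    using out_nbrs_v1_meet_outliers finite_outliers by auto
  moreover have "card (outliers u \<inter> out_nbrs A v1) \<noteq> 2"
  proof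
    assume "card (outliers u \<inter> out_nbrs A v1) = 2"
    then have "outliers u \<inter> out_nbrs A v1 = out_nbrs A v1"
      using card_out_nbrs[OF in_V(3)] finite_out_nbrs by (intro card_subset_eq) auto
    then show False using out_nbrs_v1_not_subset_outliers by blast
  qed
  moreover have "card (outliers u \<inter> out_nbrs A v1) \<le> 2"
    using card_mono[OF finite_out_nbrs, of "outliers u \<inter> out_nbrs A v1" v1]
      card_out_nbrs[OF in_V(3)] by auto
  ultimately show ?thesis by linarith
qed

end

theorem corollary4:
  fixes V :: "'a set" and A :: "'a \<Rightarrow> 'a \<Rightarrow> bool" and k :: nat and u v u1 u2 v1 :: 'a
  assumes "k \<ge> 4"
    and "diregular_2k3 V A k"
    and "u \<in> V" and "v \<in> V" and "u \<noteq> v"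
    and "out_nbrs A u \<inter> out_nbrs A v = {u2}"
    and "out_nbrs A u = {u1, u2}"
    and "out_nbrs A v = {v1, u2}"
  shows "v1 \<in> outlier_set V A k u \<and> u1 \<in> outlier_set V A k v \<and>
         card (outlier_set V A k u \<inter> out_nbrs A v1) = 1 \<and>
         card (outlier_set V A k v \<inter> out_nbrs A u1) = 1"
proof -
  have digraph: "digraph_2k3 V A k" using digraph_2k3_if_diregular_2k3[OF assms(2)] .
  have "u1 \<noteq> u2" using digraph_2k3.card_out_nbrs[OF digraph assms(3)] assms(7) by auto
  then have "u1 \<noteq> v1" using assms(6-8) by auto
  then interpret common_out_nbr V A k u v u1 u2 v1
    using assms by (intro common_out_nbr.intro[OF digraph] common_out_nbr_axioms.intro)
  interpret swapped: common_out_nbr V A k v u v1 u2 u1 by (rule common_out_nbr_swap)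
  show ?thesis
    using v1_outlier swapped.v1_outlier card_outliers_inter_out_nbrs_v1
      swapped.card_outliers_inter_out_nbrs_v1 by blast
qed

end
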